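(* Let $h\colon[0,1/2]\to[0,1]$ be the binary entropy function (in bits), $h^{-1}\colon[0,1]\to[0,1/2]$ its inverse, and $a\ast b=a(1-b)+(1-a)b$. For every $x\in[0,1]$, the function $g_x(t)=h\big(h^{-1}(t)\ast h^{-1}(2x-t)\big)$, defined for $t\in[\max\{0,2x-1\},x]$, is decreasing in $t$. *)

theory Defs
  imports Complex_Main
begin

definition bin_entropy :: "real \<Rightarrow> real" where
  "bin_entropy p = (if p = 0 \<or> p = 1 then 0
      else - p * log 2 p - (1 - p) * log 2 (1 - p))"

definition bin_entropy_inv :: "real \<Rightarrow> real" where
  "bin_entropy_inv t = (THE p. 0 \<le> p \<and> p \<le> 1/2 \<and> bin_entropy p = t)"

definition bconv :: "real \<Rightarrow> real \<Rightarrow> real" where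
  "bconv a b = a * (1 - b) + (1 - a) * b"

definition g_fun :: "real \<Rightarrow> real \<Rightarrow> real" where
  "g_fun x t = bin_entropy (bconv (bin_entropy_inv t) (bin_entropy_inv (2 * x - t)))"

end

theory Submission
  imports Defs "HOL-Real_Asymp.Real_Asymp"
begin

(* Write a = 1 - 2p for the bias of a bit with error probability p. Binary convolution
   multiplies biases, so g_x(t) = G(a b) / ln 2, where G is the entropy as a function of
   the bias, a and b are the biases of h^-1(t) and h^-1(2x - t), and G is decreasing on
   [0,1] with G' = -artanh. Moving t towards x keeps G(a) + G(b) = 2x ln 2 fixed and brings
   a and b closer together, so it suffices that the product ab grows. Along the hyperbola
   ab = c the derivative of a \<mapsto> G(a) + G(c/a) is (b artanh b - a artanh a) / a with
   b = c/a, which is nonpositive for b \<le> a because u artanh u is increasing: of two pairs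
   with the same entropy sum, the more spread one has the smaller product. *)

(* Entropy in nats of a bit with bias a; the junk value ln 0 = 0 makes it correct at a = \<plusminus>1. *)
definition bias_entropy :: "real \<Rightarrow> real" where
  "bias_entropy a = - ((1 - a) / 2) * ln ((1 - a) / 2) - ((1 + a) / 2) * ln ((1 + a) / 2)"

lemma bin_entropy_eq_bias_entropy: "bin_entropy p = bias_entropy (1 - 2 * p) / ln 2"
  by (auto simp: bin_entropy_def bias_entropy_def log_def diff_divide_distrib)

lemma continuous_on_bias_entropy: "continuous_on {-1..1} bias_entropy"
proof (rule continuous_on_IccI)
  show "(bias_entropy \<longlongrightarrow> bias_entropy (-1)) (at_right (-1))"
    unfolding bias_entropy_def by real_asymp
  show "(bias_entropy \<longlongrightarrow> bias_entropy 1) (at_left 1)"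
    unfolding bias_entropy_def by real_asymp
  show "bias_entropy \<midarrow>a\<rightarrow> bias_entropy a" if "-1 < a" "a < 1" for a
    using that unfolding bias_entropy_def by (intro tendsto_intros) auto
qed simp

lemma bias_entropy_has_real_derivative:
  assumes "-1 < a" "a < 1"
  shows "(bias_entropy has_real_derivative - artanh a) (at a)"
proof -
  have "(bias_entropy has_real_derivative (ln ((1 - a) / 2) - ln ((1 + a) / 2)) / 2) (at a)"
    unfolding bias_entropy_def [abs_def] using assms
    by (auto intro!: derivative_eq_intros simp: divide_simps) (simp add: algebra_simps)
  also have "(ln ((1 - a) / 2) - ln ((1 + a) / 2)) / 2 = - artanh a"
    using assms by (simp add: artanh_def ln_div field_simps)
  finally show ?thesis .
qed

lemma artanh_real_mono: "-1 < x \<Longrightarrow> x \<le> y \<Longrightarrow> y < 1 \<Longrightarrow> artanh x \<le> artanh (y :: real)"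
  unfolding artanh_def by (simp add: divide_right_mono frac_le)

lemma artanh_real_pos: "0 < x \<Longrightarrow> x < 1 \<Longrightarrow> 0 < artanh (x :: real)"
  unfolding artanh_def by simp

lemma mult_artanh_real_mono:
  "0 \<le> x \<Longrightarrow> x \<le> y \<Longrightarrow> y < 1 \<Longrightarrow> x * artanh x \<le> y * artanh (y :: real)"
  using artanh_real_mono[of 0 x] by (intro mult_mono artanh_real_mono) auto

lemma bias_entropy_strict_antimono:
  assumes "0 \<le> a" "a < b" "b \<le> 1"
  shows "bias_entropy b < bias_entropy a"
proof (rule DERIV_neg_imp_decreasing_open[OF \<open>a < b\<close>])
  fix u assume "a < u" "u < b"
  with assms show "\<exists>d. (bias_entropy has_real_derivative d) (at u) \<and> d < 0"
    by (intro exI[of _ "- artanh u"]) (auto intro: bias_entropy_has_real_derivative artanh_real_pos)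
next
  show "continuous_on {a..b} bias_entropy"
    by (rule continuous_on_subset[OF continuous_on_bias_entropy]) (use assms in auto)
qed

lemma bias_entropy_antimono:
  "0 \<le> a \<Longrightarrow> a \<le> b \<Longrightarrow> b \<le> 1 \<Longrightarrow> bias_entropy b \<le> bias_entropy a"
  using bias_entropy_strict_antimono[of a b] by (cases "a = b") auto

lemma bias_entropy_hyperbola_antimono:
  assumes "0 < b" "b \<le> a" "a \<le> a'" "a' \<le> 1"
  shows "bias_entropy a' + bias_entropy (a * b / a') \<le> bias_entropy a + bias_entropy b"
proof -
  define F where "F u = bias_entropy u + bias_entropy (a * b / u)" for u
  have "F a' \<le> F a"
  proof (rule DERIV_nonpos_imp_decreasing_open[OF \<open>a \<le> a'\<close>])
    fix u assume u: "a < u" "u < a'"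
    define v where "v = a * b / u"
    have "v < b"
      using u assms by (simp add: v_def pos_divide_less_eq mult.commute mult_strict_right_mono)
    moreover have "0 < v"
      using u assms by (simp add: v_def)
    ultimately have v: "0 < v" "v < u" "u < 1"
      using u assms by auto
    have inner: "((\<lambda>u. a * b / u) has_real_derivative - v / u) (at u)"
      using v by (auto intro!: derivative_eq_intros simp: v_def power2_eq_square)
    have outer: "(bias_entropy has_real_derivative - artanh v) (at (a * b / u))"
      using v by (auto intro: bias_entropy_has_real_derivative simp: v_def[symmetric])
    have "(F has_real_derivative - artanh u + - artanh v * (- v / u)) (at u)"
      unfolding F_def using v
      by (intro DERIV_add DERIV_chain2[OF outer inner] bias_entropy_has_real_derivative) auto
    moreover have "- artanh u + artanh v * (v / u) = (v * artanh v - u * artanh u) / u"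
      using v by (simp add: field_simps)
    moreover have "v * artanh v - u * artanh u \<le> 0"
      using mult_artanh_real_mono[of v u] v by simp
    ultimately show "\<exists>d. (F has_real_derivative d) (at u) \<and> d \<le> 0"
      using v by (intro exI[of _ "(v * artanh v - u * artanh u) / u"]) (auto simp: divide_nonpos_pos)
  next
    have "continuous_on {a..a'} (\<lambda>u. a * b / u)"
      using assms by (intro continuous_intros) auto
    moreover have "(\<lambda>u. a * b / u) ` {a..a'} \<subseteq> {-1..1}"
    proof (rule image_subsetI)
      fix u assume "u \<in> {a..a'}"
      moreover have "a * b \<le> u * 1"
        using assms \<open>u \<in> {a..a'}\<close> by (intro mult_mono) auto
      ultimately show "a * b / u \<in> {-1..1}"
        using assms by (auto simp: divide_le_eq intro: order_trans[of _ 0])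
    qed
    ultimately show "continuous_on {a..a'} F"
      unfolding F_def using assms
      by (intro continuous_intros continuous_on_subset[OF continuous_on_bias_entropy]
               continuous_on_compose2[OF continuous_on_bias_entropy]) auto
  qed
  then show ?thesis
    using assms by (simp add: F_def)
qed

lemma bias_entropy_sum_eq_imp_product_le:
  assumes "0 \<le> b" "b \<le> b'" "b' \<le> a'" "a' \<le> a" "a \<le> 1"
    and "bias_entropy a + bias_entropy b = bias_entropy a' + bias_entropy b'"
  shows "a * b \<le> a' * b'"
proof (rule ccontr)
  assume "\<not> a * b \<le> a' * b'"
  then have less: "a' * b' < a * b" by simp
  have "0 < b'"
    using less assms by (cases "b' = 0") auto
  have "0 < a"
    using \<open>0 < b'\<close> assms by linarith
  have "a' * b' / a < b"
    using less \<open>0 < a\<close> by (simp add: pos_divide_less_eq mult.commute)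
  then have "bias_entropy b < bias_entropy (a' * b' / a)"
    using assms \<open>0 < a\<close> \<open>0 < b'\<close> by (intro bias_entropy_strict_antimono) auto
  moreover have "bias_entropy a + bias_entropy (a' * b' / a) \<le> bias_entropy a' + bias_entropy b'"
    using assms \<open>0 < b'\<close> by (intro bias_entropy_hyperbola_antimono) auto
  ultimately show False
    using assms(6) by linarith
qed

lemma continuous_on_bin_entropy: "continuous_on {0..1} bin_entropy"
proof -
  have "continuous_on {0..1} (\<lambda>p. bias_entropy (1 - 2 * p) / ln 2)"
    by (intro continuous_intros continuous_on_compose2[OF continuous_on_bias_entropy]) auto
  then show ?thesis
    unfolding bin_entropy_eq_bias_entropy [abs_def] .
qed

lemma bin_entropy_strict_mono:
  "0 \<le> p \<Longrightarrow> p < q \<Longrightarrow> q \<le> 1/2 \<Longrightarrow> bin_entropy p < bin_entropy q"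
  using bias_entropy_strict_antimono[of "1 - 2 * q" "1 - 2 * p"]
  by (simp add: bin_entropy_eq_bias_entropy divide_strict_right_mono)

lemma bin_entropy_inv:
  assumes "0 \<le> t" "t \<le> 1"
  shows "0 \<le> bin_entropy_inv t" "bin_entropy_inv t \<le> 1/2" "bin_entropy (bin_entropy_inv t) = t"
proof -
  have "continuous_on {0..1/2} bin_entropy"
    by (rule continuous_on_subset[OF continuous_on_bin_entropy]) auto
  moreover have "bin_entropy 0 \<le> t" "t \<le> bin_entropy (1/2)"
    using assms by (simp_all add: bin_entropy_def log_divide)
  ultimately obtain p where p: "0 \<le> p" "p \<le> 1/2" "bin_entropy p = t"
    using IVT'[of bin_entropy 0 t "1/2"] by auto
  have "q = p" if "0 \<le> q \<and> q \<le> 1/2 \<and> bin_entropy q = t" for q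
    using bin_entropy_strict_mono[of p q] bin_entropy_strict_mono[of q p] that p
    by (cases p q rule: linorder_cases) auto
  with p have "\<exists>!p. 0 \<le> p \<and> p \<le> 1/2 \<and> bin_entropy p = t"
    by blast
  from theI'[OF this] show "0 \<le> bin_entropy_inv t" "bin_entropy_inv t \<le> 1/2"
      "bin_entropy (bin_entropy_inv t) = t"
    unfolding bin_entropy_inv_def by auto
qed

lemma bin_entropy_inv_mono:
  assumes "0 \<le> s" "s \<le> t" "t \<le> 1"
  shows "bin_entropy_inv s \<le> bin_entropy_inv t"
proof (rule ccontr)
  assume "\<not> ?thesis"
  then have "bin_entropy (bin_entropy_inv t) < bin_entropy (bin_entropy_inv s)"
    using bin_entropy_inv[of s] bin_entropy_inv[of t] assms by (intro bin_entropy_strict_mono) auto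
  then show False
    using bin_entropy_inv[of s] bin_entropy_inv[of t] assms by auto
qed

lemma bias_entropy_bias_bin_entropy_inv:
  "0 \<le> t \<Longrightarrow> t \<le> 1 \<Longrightarrow> bias_entropy (1 - 2 * bin_entropy_inv t) = ln 2 * t"
  using bin_entropy_inv(3)[of t] by (simp add: bin_entropy_eq_bias_entropy field_simps)

lemma bias_bconv: "1 - 2 * bconv p q = (1 - 2 * p) * (1 - 2 * q)"
  by (simp add: bconv_def algebra_simps)

lemma g_fun_eq_bias_entropy:
  "g_fun x t = bias_entropy ((1 - 2 * bin_entropy_inv t) * (1 - 2 * bin_entropy_inv (2 * x - t))) / ln 2"
  by (simp add: g_fun_def bin_entropy_eq_bias_entropy bias_bconv)

theorem mainTheorem4:
  fixes x :: real
  assumes "0 \<le> x" and "x \<le> 1"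
  shows "antimono_on {max 0 (2 * x - 1) .. x} (g_fun x)"
proof (rule monotone_onI)
  fix s t assume "s \<in> {max 0 (2 * x - 1) .. x}" "t \<in> {max 0 (2 * x - 1) .. x}" "s \<le> t"
  then have range: "0 \<le> s" "s \<le> t" "t \<le> 2 * x - t" "2 * x - t \<le> 2 * x - s" "2 * x - s \<le> 1"
    by auto
  define bias where "bias u = 1 - 2 * bin_entropy_inv u" for u
  have bias_range: "0 \<le> bias u" "bias u \<le> 1" if "0 \<le> u" "u \<le> 1" for u
    using bin_entropy_inv[OF that] by (auto simp: bias_def)
  have bias_antimono: "bias v \<le> bias u" if "0 \<le> u" "u \<le> v" "v \<le> 1" for u v
    using bin_entropy_inv_mono[OF that] by (simp add: bias_def)
  have bias_entropy_bias: "bias_entropy (bias u) = ln 2 * u" if "0 \<le> u" "u \<le> 1" for u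
    using bias_entropy_bias_bin_entropy_inv[OF that] by (simp add: bias_def)
  have "bias_entropy (bias s) + bias_entropy (bias (2 * x - s))
      = bias_entropy (bias t) + bias_entropy (bias (2 * x - t))"
    using range by (simp add: bias_entropy_bias algebra_simps)
  then have "bias s * bias (2 * x - s) \<le> bias t * bias (2 * x - t)"
    using range by (intro bias_entropy_sum_eq_imp_product_le bias_range bias_antimono) auto
  then show "g_fun x t \<le> g_fun x s"
    unfolding g_fun_eq_bias_entropy bias_def[symmetric] using range
    by (intro divide_right_mono bias_entropy_antimono mult_nonneg_nonneg mult_le_one bias_range) auto
qed

end
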